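(* Let $y:\mathbb{R}\to\mathbb{C}^q$ be an almost periodic function with $y_\gamma(t)=(y(\gamma^{p_1}(t)),\dots,y(\gamma^{p_\ell}(t)))\in W$ for all $t\in\mathbb{R}$. Assume (H2) holds and $F$ satisfies (H4). Then the function $g(t)=F(t,y_\gamma(t))$ satisfies (H3), i.e.: for every $\varepsilon>0$ the set $\{\tau\in\mathbb{R}:|g(t+\tau)-g(t)|\le\varepsilon \text{ for all } t\in\mathbb{R}\setminus\bigcup_{n\in\mathbb{Z}}(t_n-\varepsilon,t_n+\varepsilon)\}$ is relatively dense, and there is $\delta_\varepsilon>0$ such that $|g(t'+\tau')-g(t')|\le\varepsilon$ whenever $|\tau'|\le\delta_\varepsilon$ and $t',t'+\tau'$ lie in a common interval $[t_n,t_{n+1}]$.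
   Context: $|\cdot|$ is the Euclidean norm. Fix a real sequence $(t_n)_{n\in\mathbb{Z}}$ with $t_n<t_{n+1}$ and $t_n\to\pm\infty$ as $n\to\pm\infty$; $t^{(k)}_n=t_{n+k}-t_n$; for $p\in\mathbb{Z}$, $\gamma^p(t)=t_{n-p}$ for $t\in[t_n,t_{n+1})$. Fix $\ell\in\mathbb{N}$ and $p_1,\dots,p_\ell\in\mathbb{N}\cup\{0\}$. A set is relatively dense if there is $l>0$ such that it meets every interval $[m,m+l]$. A continuous $y:\mathbb{R}\to\mathbb{C}^q$ is almost periodic if for every $\varepsilon>0$ the set $\{\tau:|y(t+\tau)-y(t)|\le\varepsilon\ \forall t\}$ is relatively dense. (H2): for every $\varepsilon>0$ the set $\bigcap_{k\in\mathbb{N}}\{T\in\mathbb{Z}:|t^{(k)}_{T+n}-t^{(k)}_n|\le\varepsilon\ \forall n\in\mathbb{Z}\}$ is relatively dense. (H4): $W\subseteq(\mathbb{C}^q)^\ell$ nonempty, $F:\mathbb{R}\times W\to\mathbb{C}^q$ continuous and uniformly almost periodic on $W$ (for every $\varepsilon>0$ the set $\{\tau\in\mathbb{R}:|F(t+\tau,w)-F(t,w)|\le\varepsilon\ \forall(t,w)\in\mathbb{R}\times W\}$ is relatively dense), and there is $L>0$ with $|F(t,x_1,\dots,x_\ell)-F(t,y_1,\dots,y_\ell)|\le L\sum_{j=1}^\ell|x_j-y_j|$ for all $t$ and all $(x_j),(y_j)\in W$. *)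

theory Defs
  imports "HOL-Analysis.Analysis"
begin

definition rel_dense :: "real set \<Rightarrow> bool" where
  "rel_dense S \<longleftrightarrow> (\<exists>l>0. \<forall>m. \<exists>x\<in>S. m \<le> x \<and> x \<le> m + l)"

definition almost_periodic :: "(real \<Rightarrow> 'a::real_normed_vector) \<Rightarrow> bool" where
  "almost_periodic y \<longleftrightarrow> continuous_on UNIV y \<and>
     (\<forall>\<epsilon>>0. rel_dense {\<tau>. \<forall>s. norm (y (s + \<tau>) - y s) \<le> \<epsilon>})"

definition admissible_seq :: "(int \<Rightarrow> real) \<Rightarrow> bool" where
  "admissible_seq tt \<longleftrightarrow> strict_mono tt \<and> filterlim tt at_top at_top \<and> filterlim tt at_bot at_bot"

definition piece_index :: "(int \<Rightarrow> real) \<Rightarrow> real \<Rightarrow> int" where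
  "piece_index tt s = (THE n. tt n \<le> s \<and> s < tt (n + 1))"

definition gammaP :: "(int \<Rightarrow> real) \<Rightarrow> int \<Rightarrow> real \<Rightarrow> real" where
  "gammaP tt p s = tt (piece_index tt s - p)"

definition tk :: "(int \<Rightarrow> real) \<Rightarrow> nat \<Rightarrow> int \<Rightarrow> real" where
  "tk tt k n = tt (n + int k) - tt n"

definition H2 :: "(int \<Rightarrow> real) \<Rightarrow> bool" where
  "H2 tt \<longleftrightarrow> (\<forall>\<epsilon>>0. rel_dense (real_of_int `
      (\<Inter>k\<in>{k::nat. k \<ge> 1}. {T::int. \<forall>n. \<bar>tk tt k (T + n) - tk tt k n\<bar> \<le> \<epsilon>})))"

definition unif_almost_periodic_on ::
    "'w set \<Rightarrow> (real \<Rightarrow> 'w \<Rightarrow> 'b::real_normed_vector) \<Rightarrow> bool" where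
  "unif_almost_periodic_on W F \<longleftrightarrow>
     (\<forall>\<epsilon>>0. rel_dense {\<tau>. \<forall>s. \<forall>w\<in>W. norm (F (s + \<tau>) w - F s w) \<le> \<epsilon>})"

definition H4 :: "((complex^'q::finite)^'l::finite) set
     \<Rightarrow> (real \<Rightarrow> (complex^'q)^'l \<Rightarrow> complex^'q) \<Rightarrow> bool" where
  "H4 W F \<longleftrightarrow> W \<noteq> {} \<and> continuous_on (UNIV \<times> W) (\<lambda>(s, w). F s w) \<and>
     unif_almost_periodic_on W F \<and>
     (\<exists>L>0. \<forall>s. \<forall>x\<in>W. \<forall>z\<in>W. norm (F s x - F s z) \<le> L * (\<Sum>j\<in>UNIV. norm (x $ j - z $ j)))"

end

theory Submission
  imports Defs
begin

text \<open>
  On a piece [t_n, t_{n+1}) the delayed argument y_gamma is constant, and its values form a bounded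
  set. By the Lipschitz condition, a finite net of that set reduces the second claim to the uniform
  continuity of finitely many almost periodic functions F(., v).

  For the first claim, a Bohr-Besicovitch pigeonhole argument yields a relatively dense set of
  tau that are almost periods of F, close to almost periods rho of y, and close to approximate
  shifts sigma of the sequence, i.e. t_{n+T} - t_n \<approx> sigma for all n. If s stays epsilon away
  from the jumps, s + tau lies in the piece with index shifted by T, so y_gamma(s + tau) samples y
  at t_{m+T-p_j} \<approx> t_{m-p_j} + rho, where y has moved little.
\<close>

section \<open>Relatively dense sets\<close>

lemma rel_dense_mono: "rel_dense S \<Longrightarrow> S \<subseteq> T \<Longrightarrow> rel_dense T"
  unfolding rel_dense_def by blast

lemma floor_divide_eq_imp_dist_less:
  fixes x y d :: real
  assumes "d > 0" "\<lfloor>x / d\<rfloor> = \<lfloor>y / d\<rfloor>"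
  shows "\<bar>x - y\<bar> < d"
proof -
  have "\<bar>x / d - y / d\<bar> < 1"
    using assms(2) floor_correct[of "x / d"] floor_correct[of "y / d"] by linarith
  then show ?thesis
    using assms(1) by (simp add: diff_divide_distrib[symmetric] abs_divide pos_divide_less_eq)
qed

lemma rel_dense_near_differences:
  fixes A B :: "real set"
  assumes A: "rel_dense A" and B: "rel_dense B" and \<delta>: "\<delta> > 0"
  shows "rel_dense {\<tau>. \<exists>a\<in>A. \<exists>a'\<in>A. \<tau> = a - a' \<and> (\<exists>b\<in>B. \<exists>b'\<in>B. \<bar>\<tau> - (b - b')\<bar> \<le> \<delta>)}"
proof -
  obtain l where l: "l > 0" "\<And>m. \<exists>a\<in>A. \<exists>b\<in>B. m \<le> a \<and> a \<le> m + l \<and> m \<le> b \<and> b \<le> m + l"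
  proof -
    obtain lA lB where "lA > 0" "\<forall>m. \<exists>a\<in>A. m \<le> a \<and> a \<le> m + lA"
      and "lB > 0" "\<forall>m. \<exists>b\<in>B. m \<le> b \<and> b \<le> m + lB"
      using A B unfolding rel_dense_def by blast
    then show ?thesis
      by (intro that[of "max lA lB"]) (auto, meson max.cobounded1 max.cobounded2 add_left_mono order_trans)
  qed
  define P where "P = {(a, b). a \<in> A \<and> b \<in> B \<and> \<bar>a - b\<bar> \<le> l}"
  define cls where "cls = (\<lambda>(a, b). \<lfloor>(a - b) / \<delta>\<rfloor>)"
  \<comment> \<open>Pigeonhole: the pairs in P fall into finitely many classes of differences of width \<delta>.\<close>
  have "cls ` P \<subseteq> {\<lfloor>-l / \<delta>\<rfloor>..\<lfloor>l / \<delta>\<rfloor>}"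
    using \<delta> by (auto simp: P_def cls_def abs_le_iff divide_le_eq le_divide_eq intro!: floor_mono)
  then obtain Q where Q: "Q \<subseteq> P" "finite Q" "cls ` P = cls ` Q"
    using finite_subset_image[of "cls ` P" cls P] by (metis finite_atLeastAtMost_int finite_subset order_refl)
  define C where "C = (\<Sum>q\<in>Q. \<bar>fst q\<bar>)"
  have C: "\<bar>fst q\<bar> \<le> C" if "q \<in> Q" for q
    unfolding C_def using Q(2) that by (intro member_le_sum) auto
  have "C \<ge> 0" unfolding C_def by (simp add: sum_nonneg)
  show ?thesis unfolding rel_dense_def
  proof (intro exI[of _ "l + 2 * C"] conjI allI)
    show "0 < l + 2 * C" using l(1) \<open>C \<ge> 0\<close> by simp
    fix m
    obtain a b where ab: "a \<in> A" "b \<in> B" "m + C \<le> a" "a \<le> m + C + l" "m + C \<le> b" "b \<le> m + C + l"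
      using l(2)[of "m + C"] by blast
    then have "(a, b) \<in> P" unfolding P_def by auto
    then obtain a' b' where a'b': "(a', b') \<in> Q" "cls (a', b') = cls (a, b)"
      using Q(3) by (metis image_iff surj_pair)
    then have "a' \<in> A" "b' \<in> B" using Q(1) by (auto simp: P_def)
    have "\<bar>(a - b) - (a' - b')\<bar> < \<delta>"
      using a'b'(2) by (intro floor_divide_eq_imp_dist_less[OF \<delta>]) (simp add: cls_def)
    then have "\<bar>(a - a') - (b - b')\<bar> \<le> \<delta>" by simp
    moreover have "m \<le> a - a'" "a - a' \<le> m + (l + 2 * C)"
      using ab(3,4) C[OF a'b'(1)] by auto
    ultimately show "\<exists>\<tau>\<in>{\<tau>. \<exists>a\<in>A. \<exists>a'\<in>A. \<tau> = a - a' \<and> (\<exists>b\<in>B. \<exists>b'\<in>B. \<bar>\<tau> - (b - b')\<bar> \<le> \<delta>)}.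
        m \<le> \<tau> \<and> \<tau> \<le> m + (l + 2 * C)"
      using ab(1,2) \<open>a' \<in> A\<close> \<open>b' \<in> B\<close> by blast
  qed
qed

section \<open>Almost periods\<close>

definition almost_periods :: "(real \<Rightarrow> 'a::real_normed_vector) \<Rightarrow> real \<Rightarrow> real set" where
  "almost_periods f e = {\<tau>. \<forall>s. norm (f (s + \<tau>) - f s) \<le> e}"

lemma almost_periods_diff:
  assumes "a \<in> almost_periods f e1" "b \<in> almost_periods f e2"
  shows "a - b \<in> almost_periods f (e1 + e2)"
  unfolding almost_periods_def
proof (intro CollectI allI)
  fix s
  have "f (s + (a - b)) - f s = (f ((s - b) + a) - f (s - b)) - (f ((s - b) + b) - f (s - b))"
    by (simp add: algebra_simps)
  also have "norm \<dots> \<le> norm (f ((s - b) + a) - f (s - b)) + norm (f ((s - b) + b) - f (s - b))"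
    by (rule norm_triangle_ineq4)
  also have "\<dots> \<le> e1 + e2"
    using assms unfolding almost_periods_def by (intro add_mono) blast+
  finally show "norm (f (s + (a - b)) - f s) \<le> e1 + e2" .
qed

lemma almost_periodic_iff:
  "almost_periodic f \<longleftrightarrow> continuous_on UNIV f \<and> (\<forall>e>0. rel_dense (almost_periods f e))"
  by (simp add: almost_periodic_def almost_periods_def)

lemma almost_periodic_uniformly_continuous:
  fixes f :: "real \<Rightarrow> 'a::real_normed_vector"
  assumes "almost_periodic f"
  shows "uniformly_continuous_on UNIV f"
  unfolding uniformly_continuous_on_def
proof (intro allI impI)
  fix e :: real assume "e > 0"
  then have "rel_dense (almost_periods f (e/3))"
    using assms unfolding almost_periodic_iff by simp
  then obtain l where l: "l > 0" "\<And>m. \<exists>\<tau>\<in>almost_periods f (e/3). m \<le> \<tau> \<and> \<tau> \<le> m + l"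
    unfolding rel_dense_def by blast
  have "uniformly_continuous_on {-1..l+1} f"
    using assms by (intro compact_uniformly_continuous) (auto simp: almost_periodic_def intro: continuous_on_subset)
  moreover have "e/3 > 0" using \<open>e > 0\<close> by simp
  ultimately obtain d where d: "d > 0" "\<And>x x'. x \<in> {-1..l+1} \<Longrightarrow> x' \<in> {-1..l+1} \<Longrightarrow> dist x' x < d \<Longrightarrow> dist (f x') (f x) < e/3"
    unfolding uniformly_continuous_on_def by blast
  \<comment> \<open>An almost period translates x and x' into the compact interval [-1, l+1].\<close>
  show "\<exists>d>0. \<forall>x\<in>UNIV. \<forall>x'\<in>UNIV. dist x' x < d \<longrightarrow> dist (f x') (f x) < e"
  proof (intro exI[of _ "min d 1"] conjI ballI impI)
    fix x x' :: real assume "dist x' x < min d 1"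
    obtain \<tau> where \<tau>: "\<tau> \<in> almost_periods f (e/3)" "-x \<le> \<tau>" "\<tau> \<le> -x + l" using l(2) by blast
    have "dist (f x') (f (x' + \<tau>)) \<le> e/3" "dist (f (x + \<tau>)) (f x) \<le> e/3"
      using \<tau>(1) by (auto simp: almost_periods_def dist_norm norm_minus_commute)
    moreover have "dist (f (x' + \<tau>)) (f (x + \<tau>)) < e/3"
      using \<open>dist x' x < min d 1\<close> \<tau>(2,3) by (intro d(2)) (auto simp: dist_real_def)
    ultimately show "dist (f x') (f x) < e"
      using dist_triangle[of "f x'" "f x" "f (x + \<tau>)"] dist_triangle[of "f x'" "f (x + \<tau>)" "f (x' + \<tau>)"]
      by linarith
  qed (use d(1) in simp)
qed

lemma uniformly_continuous_on_UNIV_increments: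
  fixes f :: "real \<Rightarrow> 'a::real_normed_vector"
  assumes "uniformly_continuous_on UNIV f" "e > 0"
  obtains d where "d > 0" "\<And>x h. \<bar>h\<bar> \<le> d \<Longrightarrow> norm (f (x + h) - f x) \<le> e"
proof -
  obtain d where "d > 0" "\<And>x x'. dist x' x < d \<Longrightarrow> dist (f x') (f x) < e"
    using assms unfolding uniformly_continuous_on_def by blast
  then show ?thesis
    by (intro that[of "d/2"]) (auto simp: dist_norm less_imp_le)
qed

lemma finite_uniformly_continuous_increments:
  fixes f :: "'i \<Rightarrow> real \<Rightarrow> 'a::real_normed_vector"
  assumes "finite K" "\<And>i. i \<in> K \<Longrightarrow> uniformly_continuous_on UNIV (f i)" "e > 0"
  obtains d where "d > 0" "\<And>i x h. i \<in> K \<Longrightarrow> \<bar>h\<bar> \<le> d \<Longrightarrow> norm (f i (x + h) - f i x) \<le> e"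
  using assms(1,2)
proof (induction K arbitrary: thesis rule: finite_induct)
  case empty
  then show ?case by (metis empty_iff zero_less_one)
next
  case (insert i K)
  obtain d where d: "d > 0" "\<And>j x h. j \<in> K \<Longrightarrow> \<bar>h\<bar> \<le> d \<Longrightarrow> norm (f j (x + h) - f j x) \<le> e"
    using insert.IH insert.prems(2) by blast
  obtain d' where d': "d' > 0" "\<And>x h. \<bar>h\<bar> \<le> d' \<Longrightarrow> norm (f i (x + h) - f i x) \<le> e"
    using uniformly_continuous_on_UNIV_increments[OF insert.prems(2) \<open>e > 0\<close>] by blast
  show ?case
    using d d' by (intro insert.prems(1)[of "min d d'"]) auto
qed

lemma almost_periodic_bounded:
  fixes f :: "real \<Rightarrow> 'a::real_normed_vector"
  assumes "almost_periodic f"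
  shows "bounded (range f)"
proof -
  obtain l where l: "\<And>m. \<exists>\<tau>\<in>almost_periods f 1. m \<le> \<tau> \<and> \<tau> \<le> m + l"
    using assms unfolding almost_periodic_iff rel_dense_def by (meson zero_less_one)
  have "bounded (f ` {0..l})"
    using assms by (intro compact_imp_bounded compact_continuous_image)
      (auto simp: almost_periodic_def intro: continuous_on_subset)
  then obtain B where B: "\<And>x. x \<in> {0..l} \<Longrightarrow> norm (f x) \<le> B"
    unfolding bounded_iff by blast
  have "norm (f s) \<le> B + 1" for s
  proof -
    obtain \<tau> where \<tau>: "\<tau> \<in> almost_periods f 1" "-s \<le> \<tau>" "\<tau> \<le> -s + l" using l by blast
    have "norm (f s) \<le> norm (f (s + \<tau>)) + norm (f (s + \<tau>) - f s)"
      by (metis norm_triangle_sub norm_minus_commute)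
    also have "\<dots> \<le> B + 1"
      using B \<tau> by (intro add_mono) (auto simp: almost_periods_def)
    finally show ?thesis .
  qed
  then show ?thesis unfolding bounded_iff by blast
qed

section \<open>Families of approximate periods\<close>

text \<open>The pattern shared by e-almost periods of functions and approximate shifts of the sequence:
  the error bound for differences is what the pigeonhole lemma rel_dense_near_differences needs.\<close>

definition period_family :: "(real \<Rightarrow> real set) \<Rightarrow> bool" where
  "period_family A \<longleftrightarrow> (\<forall>e>0. rel_dense (A e)) \<and> (\<forall>e1 e2. \<forall>a\<in>A e1. \<forall>b\<in>A e2. a - b \<in> A (e1 + e2))"

definition approx_common :: "(real \<Rightarrow> real set) \<Rightarrow> (real \<Rightarrow> real set) \<Rightarrow> real \<Rightarrow> real set" where
  "approx_common A B e = {\<tau> \<in> A e. \<exists>\<sigma>\<in>B e. \<bar>\<tau> - \<sigma>\<bar> \<le> e}"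

lemma period_family_approx_common:
  assumes A: "period_family A" and B: "period_family B"
  shows "period_family (approx_common A B)"
  unfolding period_family_def
proof (intro conjI allI impI ballI)
  fix e :: real assume "e > 0"
  then have "rel_dense {\<tau>. \<exists>a\<in>A (e/2). \<exists>a'\<in>A (e/2). \<tau> = a - a' \<and> (\<exists>b\<in>B (e/2). \<exists>b'\<in>B (e/2). \<bar>\<tau> - (b - b')\<bar> \<le> e)}"
    using A B unfolding period_family_def by (intro rel_dense_near_differences) auto
  then show "rel_dense (approx_common A B e)"
  proof (rule rel_dense_mono, safe)
    fix a a' b b' assume "a \<in> A (e/2)" "a' \<in> A (e/2)" "b \<in> B (e/2)" "b' \<in> B (e/2)"
      and close: "\<bar>a - a' - (b - b')\<bar> \<le> e"
    then have "a - a' \<in> A (e/2 + e/2)" "b - b' \<in> B (e/2 + e/2)"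
      using A B unfolding period_family_def by blast+
    then show "a - a' \<in> approx_common A B e"
      using close unfolding approx_common_def by auto
  qed
next
  fix e1 e2 a b assume "a \<in> approx_common A B e1" "b \<in> approx_common A B e2"
  then obtain \<sigma> \<sigma>' where "a \<in> A e1" "\<sigma> \<in> B e1" "\<bar>a - \<sigma>\<bar> \<le> e1" "b \<in> A e2" "\<sigma>' \<in> B e2" "\<bar>b - \<sigma>'\<bar> \<le> e2"
    unfolding approx_common_def by blast
  moreover have "\<bar>(a - b) - (\<sigma> - \<sigma>')\<bar> \<le> e1 + e2" using calculation by linarith
  ultimately show "a - b \<in> approx_common A B (e1 + e2)"
    using A B unfolding period_family_def approx_common_def by blast
qed

lemma period_family_almost_periods:
  "almost_periodic f \<Longrightarrow> period_family (almost_periods f)"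
  by (auto simp: period_family_def almost_periodic_iff almost_periods_diff)

lemma period_family_unif_almost_periods:
  assumes "unif_almost_periodic_on W F"
  shows "period_family (\<lambda>e. \<Inter>w\<in>W. almost_periods (\<lambda>s. F s w) e)"
  unfolding period_family_def
proof (intro conjI allI impI ballI)
  fix e :: real assume "e > 0"
  moreover have "(\<Inter>w\<in>W. almost_periods (\<lambda>s. F s w) e) = {\<tau>. \<forall>s. \<forall>w\<in>W. norm (F (s + \<tau>) w - F s w) \<le> e}"
    by (auto simp: almost_periods_def)
  ultimately show "rel_dense (\<Inter>w\<in>W. almost_periods (\<lambda>s. F s w) e)"
    using assms unfolding unif_almost_periodic_on_def by simp
next
  fix e1 e2 a b
  assume "a \<in> (\<Inter>w\<in>W. almost_periods (\<lambda>s. F s w) e1)" "b \<in> (\<Inter>w\<in>W. almost_periods (\<lambda>s. F s w) e2)"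
  then show "a - b \<in> (\<Inter>w\<in>W. almost_periods (\<lambda>s. F s w) (e1 + e2))"
    by (auto intro: almost_periods_diff)
qed

section \<open>Pieces and shifts of the sequence\<close>

lemma piece_exists:
  assumes "admissible_seq tt"
  shows "\<exists>n. tt n \<le> s \<and> s < tt (n + 1)"
proof -
  obtain N where N: "\<And>n. n \<ge> N \<Longrightarrow> tt n > s"
    using assms unfolding admissible_seq_def filterlim_at_top_dense eventually_at_top_linorder by blast
  obtain M where M: "\<And>n. n \<le> M \<Longrightarrow> tt n \<le> s"
    using assms unfolding admissible_seq_def filterlim_at_bot eventually_at_bot_linorder by blast
  \<comment> \<open>Walk up from a point below s to one above it.\<close>
  have "tt m \<le> s \<Longrightarrow> s < tt (m + int k) \<Longrightarrow> \<exists>n. tt n \<le> s \<and> s < tt (n + 1)" for k m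
  proof (induction k arbitrary: m)
    case (Suc k)
    then show ?case
      by (cases "s < tt (m + 1)") (auto intro: Suc.IH[of "m + 1"] simp: add.assoc)
  qed simp
  moreover have "tt (min M N) \<le> s" "s < tt (min M N + int (nat (N - min M N)))"
    using M N by simp_all
  ultimately show ?thesis by blast
qed

lemma piece_index_eq:
  assumes "admissible_seq tt" "tt n \<le> s" "s < tt (n + 1)"
  shows "piece_index tt s = n"
  unfolding piece_index_def
proof (rule the_equality)
  fix n' assume n': "tt n' \<le> s \<and> s < tt (n' + 1)"
  have "strict_mono tt" using assms(1) unfolding admissible_seq_def by simp
  then have "\<not> n + 1 \<le> n'" "\<not> n' + 1 \<le> n"
    using assms(2,3) n' by (metis leD order.strict_trans1 strict_mono_less_eq)+
  then show "n' = n" by simp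
qed (use assms in simp)

lemma piece_index_bounds:
  assumes "admissible_seq tt"
  shows "tt (piece_index tt s) \<le> s" "s < tt (piece_index tt s + 1)"
  using piece_exists[OF assms, of s] piece_index_eq[OF assms] by auto

definition seq_shifts :: "(int \<Rightarrow> real) \<Rightarrow> real \<Rightarrow> real set" where
  "seq_shifts tt e = {\<sigma>. \<exists>T. \<forall>n. \<bar>tt (n + T) - tt n - \<sigma>\<bar> \<le> e}"

lemma seq_shifts_diff:
  assumes "a \<in> seq_shifts tt e1" "b \<in> seq_shifts tt e2"
  shows "a - b \<in> seq_shifts tt (e1 + e2)"
proof -
  obtain T1 T2 where T1: "\<And>n. \<bar>tt (n + T1) - tt n - a\<bar> \<le> e1" and T2: "\<And>n. \<bar>tt (n + T2) - tt n - b\<bar> \<le> e2"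
    using assms unfolding seq_shifts_def by blast
  have "\<bar>tt (n + (T1 - T2)) - tt n - (a - b)\<bar> \<le> e1 + e2" for n
    using T1[of "n - T2"] T2[of "n - T2"] by (simp add: algebra_simps abs_le_iff)
  then show ?thesis unfolding seq_shifts_def by blast
qed

definition seq_almost_periods :: "(int \<Rightarrow> real) \<Rightarrow> real \<Rightarrow> int set" where
  "seq_almost_periods tt \<epsilon> = (\<Inter>k\<in>{k::nat. k \<ge> 1}. {T. \<forall>n. \<bar>tk tt k (T + n) - tk tt k n\<bar> \<le> \<epsilon>})"

lemma seq_almost_periodsD:
  "T \<in> seq_almost_periods tt \<epsilon> \<Longrightarrow> k \<ge> 1 \<Longrightarrow> \<bar>tk tt k (T + n) - tk tt k n\<bar> \<le> \<epsilon>"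
  unfolding seq_almost_periods_def by blast

lemma H2E:
  assumes "H2 tt" "\<epsilon> > 0"
  obtains l :: real where "l > 0"
    "\<And>m. \<exists>T\<in>seq_almost_periods tt \<epsilon>. m \<le> of_int T \<and> of_int T \<le> m + l"
proof -
  have "rel_dense (real_of_int ` seq_almost_periods tt \<epsilon>)"
    using assms unfolding H2_def seq_almost_periods_def by simp
  then show ?thesis
    using that unfolding rel_dense_def by fastforce
qed

lemma seq_almost_period_shift:
  assumes "T \<in> seq_almost_periods tt \<epsilon>" "\<epsilon> > 0"
  shows "tt T - tt 0 \<in> seq_shifts tt \<epsilon>"
proof -
  have "\<bar>tt (n + T) - tt n - (tt T - tt 0)\<bar> \<le> \<epsilon>" for n
  proof (cases n "0::int" rule: linorder_cases)
    case less
    then show ?thesis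
      using seq_almost_periodsD[OF assms(1), of "nat (- n)" n] by (simp add: tk_def algebra_simps abs_minus_commute)
  next
    case greater
    then show ?thesis
      using seq_almost_periodsD[OF assms(1), of "nat n" 0] by (simp add: tk_def algebra_simps)
  qed (use assms(2) in simp)
  then show ?thesis unfolding seq_shifts_def by blast
qed

lemma H2_bounded_steps:
  assumes "H2 tt"
  obtains D where "\<And>n. tt (n + 1) - tt n \<le> D"
proof -
  obtain l :: real where l: "\<And>m. \<exists>T\<in>seq_almost_periods tt 1. m \<le> of_int T \<and> of_int T \<le> m + l"
    using H2E[OF assms zero_less_one] by blast
  define D where "D = Max ((\<lambda>j. tt (j + 1) - tt j) ` {0..\<lceil>l\<rceil>}) + 1"
  \<comment> \<open>Up to an error 1, the step at n equals the step at n - T, where 0 \<le> n - T \<le> l.\<close>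
  have "tt (n + 1) - tt n \<le> D" for n
  proof -
    obtain T where T: "T \<in> seq_almost_periods tt 1" "real_of_int n - l \<le> real_of_int T" "real_of_int T \<le> real_of_int n - l + l"
      using l[of "real_of_int n - l"] by blast
    then have "tt (n + 1) - tt n \<le> tt (n - T + 1) - tt (n - T) + 1"
      using seq_almost_periodsD[OF T(1), of 1 "n - T"] unfolding tk_def by simp
    also have "n - T \<in> {0..\<lceil>l\<rceil>}"
      using T(2,3) by (auto simp: le_ceiling_iff)
    then have "tt (n - T + 1) - tt (n - T) + 1 \<le> D"
      unfolding D_def by (intro add_right_mono Max_ge) auto
    finally show ?thesis .
  qed
  then show ?thesis using that by blast
qed

lemma seq_growth_bound:
  assumes "\<And>n. tt (n + 1) - tt n \<le> D"
  shows "tt (n + int k) \<le> tt n + real k * D"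
proof (induction k)
  case (Suc k)
  have "tt (n + int (Suc k)) \<le> tt (n + int k) + D"
    using assms[of "n + int k"] by (simp add: ac_simps)
  then show ?case using Suc.IH by (simp add: algebra_simps)
qed simp

lemma period_family_seq_shifts:
  assumes seq: "admissible_seq tt" and h2: "H2 tt"
  shows "period_family (seq_shifts tt)"
  unfolding period_family_def
proof (intro conjI allI impI ballI)
  fix \<epsilon> :: real assume "\<epsilon> > 0"
  obtain l :: real where l: "l > 0" "\<And>m. \<exists>T\<in>seq_almost_periods tt \<epsilon>. m \<le> of_int T \<and> of_int T \<le> m + l"
    using H2E[OF h2 \<open>\<epsilon> > 0\<close>] by blast
  obtain D where D: "\<And>n. tt (n + 1) - tt n \<le> D" using H2_bounded_steps[OF h2] by blast
  have "tt 0 < tt 1" using seq unfolding admissible_seq_def strict_mono_def by simp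
  then have "D \<ge> 0" using D[of 0] by simp
  show "rel_dense (seq_shifts tt \<epsilon>)" unfolding rel_dense_def
  proof (intro exI[of _ "D * (l + 1) + 1"] conjI allI)
    show "0 < D * (l + 1) + 1" using \<open>D \<ge> 0\<close> l(1) by (intro add_nonneg_pos mult_nonneg_nonneg) auto
    fix m
    \<comment> \<open>A shift T of the right size, found just above the piece containing m + t_0.\<close>
    define n0 where "n0 = piece_index tt (m + tt 0)"
    obtain T where T: "n0 + 1 \<le> T" "T \<le> n0 + 1 + l" "T \<in> seq_almost_periods tt \<epsilon>"
      using l(2)[of "n0 + 1"] by (auto simp del: of_int_add)
    define k where "k = nat (T - (n0 + 1))"
    have k: "T = n0 + 1 + int k" "real k \<le> l"
      using T(1,2) unfolding k_def by auto
    have "tt (n0 + 1) \<le> tt T"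
      using T(1) seq unfolding admissible_seq_def by (simp add: strict_mono_less_eq)
    moreover have "tt T \<le> tt (n0 + 1) + l * D"
      using seq_growth_bound[of tt D "n0 + 1" k] D k mult_right_mono[OF k(2) \<open>D \<ge> 0\<close>] by simp
    moreover have "tt n0 \<le> m + tt 0" "m + tt 0 < tt (n0 + 1)"
      unfolding n0_def by (fact piece_index_bounds[OF seq])+
    moreover have "D * (l + 1) = l * D + D" by (simp add: algebra_simps)
    ultimately have "m \<le> tt T - tt 0" "tt T - tt 0 \<le> m + (D * (l + 1) + 1)"
      using D[of n0] by linarith+
    then show "\<exists>\<sigma>\<in>seq_shifts tt \<epsilon>. m \<le> \<sigma> \<and> \<sigma> \<le> m + (D * (l + 1) + 1)"
      using seq_almost_period_shift[OF T(3) \<open>\<epsilon> > 0\<close>] by blast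
  qed
qed (blast intro: seq_shifts_diff)

section \<open>The delayed argument\<close>

definition y_gamma :: "(int \<Rightarrow> real) \<Rightarrow> ('l \<Rightarrow> nat) \<Rightarrow> (real \<Rightarrow> 'a) \<Rightarrow> real \<Rightarrow> 'a^'l" where
  "y_gamma tt p y s = (\<chi> j. y (gammaP tt (int (p j)) s))"

lemma y_gamma_nth: "y_gamma tt p y s $ j = y (tt (piece_index tt s - int (p j)))"
  by (simp add: y_gamma_def gammaP_def)

lemma y_gamma_eq_on_piece:
  assumes "admissible_seq tt" "s \<in> {tt n..<tt (n + 1)}" "s' \<in> {tt n..<tt (n + 1)}"
  shows "y_gamma tt p y s' = y_gamma tt p y s"
proof -
  have "piece_index tt s' = n" "piece_index tt s = n"
    using assms by (auto intro: piece_index_eq)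
  then show ?thesis by (simp add: y_gamma_def gammaP_def)
qed

lemma bounded_range_y_gamma:
  fixes y :: "real \<Rightarrow> 'a::real_normed_vector"
  assumes "bounded (range y)"
  shows "bounded (range (y_gamma tt p y :: real \<Rightarrow> 'a^'l::finite))"
proof -
  obtain B where B: "\<And>s. norm (y s) \<le> B" using assms unfolding bounded_iff by blast
  have "norm (y_gamma tt p y s) \<le> CARD('l) * B" for s
  proof -
    have "norm (y_gamma tt p y s) \<le> (\<Sum>j\<in>UNIV. norm (y_gamma tt p y s $ j))"
      unfolding norm_vec_def by (rule L2_set_le_sum) simp
    also have "\<dots> \<le> CARD('l) * B"
      using sum_bounded_above[of UNIV "\<lambda>j. norm (y_gamma tt p y s $ j)" B] by (simp add: y_gamma_nth B)
    finally show ?thesis .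
  qed
  then show ?thesis unfolding bounded_iff by blast
qed

lemma sum_lipschitz_bound:
  fixes x z :: "'a::real_normed_vector^'n::finite"
  assumes lip: "\<forall>s. \<forall>x\<in>W. \<forall>z\<in>W. norm (F s x - F s z) \<le> L * (\<Sum>j\<in>UNIV. norm (x $ j - z $ j))"
    and "L \<ge> 0" "x \<in> W" "z \<in> W" "\<And>j. norm (x $ j - z $ j) \<le> r"
  shows "norm (F s x - F s z) \<le> L * CARD('n) * r"
proof -
  have "norm (F s x - F s z) \<le> L * (\<Sum>j\<in>UNIV. norm (x $ j - z $ j))"
    using lip assms(3,4) by blast
  also have "\<dots> \<le> L * (CARD('n) * r)"
    using sum_bounded_above[of UNIV "\<lambda>j. norm (x $ j - z $ j)" r] assms(2,5)
    by (intro mult_left_mono) simp_all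
  finally show ?thesis by (simp add: mult.assoc)
qed

lemma piece_index_shift:
  assumes seq: "admissible_seq tt"
    and T: "\<And>n. \<bar>tt (n + T) - tt n - \<sigma>\<bar> \<le> e" and "\<bar>\<tau> - \<sigma>\<bar> \<le> e" and "2 * e < \<epsilon>"
    and away: "s \<notin> (\<Union>n. {tt n - \<epsilon> <..< tt n + \<epsilon>})"
  shows "piece_index tt (s + \<tau>) = piece_index tt s + T"
proof (rule piece_index_eq[OF seq])
  define m where "m = piece_index tt s"
  have "tt m \<le> s" "s < tt (m + 1)"
    unfolding m_def by (fact piece_index_bounds[OF seq])+
  moreover have "s \<notin> {tt m - \<epsilon> <..< tt m + \<epsilon>}" "s \<notin> {tt (m + 1) - \<epsilon> <..< tt (m + 1) + \<epsilon>}"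
    using away by blast+
  ultimately have "tt m + \<epsilon> \<le> s" "s \<le> tt (m + 1) - \<epsilon>"
    using \<open>2 * e < \<epsilon>\<close> \<open>\<bar>\<tau> - \<sigma>\<bar> \<le> e\<close> by (auto simp: not_less)
  moreover have "tt (m + T + 1) = tt (m + 1 + T)" by (simp add: ac_simps)
  ultimately show "tt (m + T) \<le> s + \<tau>" "s + \<tau> < tt (m + T + 1)"
    using T[of m] T[of "m + 1"] \<open>2 * e < \<epsilon>\<close> \<open>\<bar>\<tau> - \<sigma>\<bar> \<le> e\<close> unfolding abs_le_iff by linarith+
qed

lemma almost_period_perturbation:
  fixes y :: "real \<Rightarrow> 'a::real_normed_vector"
  assumes "\<rho> \<in> almost_periods y e" "\<And>x h. \<bar>h\<bar> \<le> d \<Longrightarrow> norm (y (x + h) - y x) \<le> a" "\<bar>u - \<rho>\<bar> \<le> d"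
  shows "norm (y (x + u) - y x) \<le> a + e"
proof -
  have "norm (y (x + u) - y (x + \<rho>)) \<le> a"
    using assms(2)[of "u - \<rho>" "x + \<rho>"] assms(3) by simp
  moreover have "norm (y (x + \<rho>) - y x) \<le> e"
    using assms(1) unfolding almost_periods_def by blast
  ultimately show ?thesis
    by (rule norm_diff_triangle_le)
qed

lemma almost_periods_off_jumps:
  fixes y :: "real \<Rightarrow> 'a::real_normed_vector"
    and F :: "real \<Rightarrow> 'a^'l::finite \<Rightarrow> 'b::real_normed_vector"
  assumes seq: "admissible_seq tt" and h2: "H2 tt"
    and y: "almost_periodic y" and F: "unif_almost_periodic_on W F"
    and inW: "\<And>s. y_gamma tt p y s \<in> W"
    and lip: "\<forall>s. \<forall>x\<in>W. \<forall>z\<in>W. norm (F s x - F s z) \<le> L * (\<Sum>j\<in>UNIV. norm (x $ j - z $ j))"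
    and "L > 0" "\<epsilon> > 0"
  shows "rel_dense {\<tau>. \<forall>s. s \<notin> (\<Union>n. {tt n - \<epsilon> <..< tt n + \<epsilon>}) \<longrightarrow>
           norm (F (s + \<tau>) (y_gamma tt p y (s + \<tau>)) - F s (y_gamma tt p y s)) \<le> \<epsilon>}"
proof -
  define N where "N = real CARD('l)"
  define a where "a = \<epsilon> / (4 * L * N)"
  have "a > 0" "L * N * (2 * a) = \<epsilon> / 2"
    unfolding a_def N_def using \<open>L > 0\<close> \<open>\<epsilon> > 0\<close> by (simp_all add: field_simps)
  obtain \<delta> where "\<delta> > 0" and y_modulus: "\<And>x h. \<bar>h\<bar> \<le> \<delta> \<Longrightarrow> norm (y (x + h) - y x) \<le> a"
    using uniformly_continuous_on_UNIV_increments[OF almost_periodic_uniformly_continuous[OF y] \<open>a > 0\<close>]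
    by blast
  define e where "e = min (\<epsilon> / 4) (min a (\<delta> / 3))"
  have "e > 0" unfolding e_def using \<open>\<epsilon> > 0\<close> \<open>a > 0\<close> \<open>\<delta> > 0\<close> by simp
  \<comment> \<open>Almost periods of F that are close to almost periods of y and to shifts of the sequence.\<close>
  define P where "P = approx_common (approx_common (\<lambda>e. \<Inter>w\<in>W. almost_periods (\<lambda>s. F s w) e)
    (almost_periods y)) (seq_shifts tt)"
  have "period_family P"
    unfolding P_def
    by (intro period_family_approx_common period_family_unif_almost_periods period_family_almost_periods
        period_family_seq_shifts F y seq h2)
  then have "rel_dense (P e)" using \<open>e > 0\<close> unfolding period_family_def by blast
  then show ?thesis
  proof (rule rel_dense_mono, safe)
    fix \<tau> s assume "\<tau> \<in> P e" and away: "s \<notin> (\<Union>n. {tt n - \<epsilon> <..< tt n + \<epsilon>})"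
    then obtain \<rho> \<sigma> T where \<tau>F: "\<And>w. w \<in> W \<Longrightarrow> \<tau> \<in> almost_periods (\<lambda>s. F s w) e"
      and \<rho>: "\<rho> \<in> almost_periods y e" "\<bar>\<tau> - \<rho>\<bar> \<le> e"
      and T: "\<And>n. \<bar>tt (n + T) - tt n - \<sigma>\<bar> \<le> e" and \<sigma>: "\<bar>\<tau> - \<sigma>\<bar> \<le> e"
      unfolding P_def approx_common_def seq_shifts_def by blast
    define m where "m = piece_index tt s"
    have shift: "piece_index tt (s + \<tau>) = m + T"
      unfolding m_def using piece_index_shift[OF seq T \<sigma> _ away] e_def \<open>\<epsilon> > 0\<close> by linarith
    \<comment> \<open>Each delayed sample moves by t_{m+T-p_j} - t_{m-p_j}, which is within 3e of the period \<rho> of y.\<close>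
    have "norm (y_gamma tt p y (s + \<tau>) $ j - y_gamma tt p y s $ j) \<le> 2 * a" for j
    proof -
      define x where "x = tt (m - int (p j))"
      have "\<bar>tt (m + T - int (p j)) - x - \<sigma>\<bar> \<le> e"
        using T[of "m - int (p j)"] unfolding x_def by (simp add: algebra_simps)
      moreover have "e \<le> \<delta> / 3" unfolding e_def by simp
      ultimately have "\<bar>(tt (m + T - int (p j)) - x) - \<rho>\<bar> \<le> \<delta>"
        using \<rho>(2) \<sigma> unfolding abs_le_iff by linarith
      with \<rho>(1) y_modulus have "norm (y (x + (tt (m + T - int (p j)) - x)) - y x) \<le> a + e"
        by (rule almost_period_perturbation)
      then show ?thesis
        using \<open>e > 0\<close> unfolding y_gamma_nth shift m_def[symmetric] x_def e_def by simp
    qed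
    then have "norm (F (s + \<tau>) (y_gamma tt p y (s + \<tau>)) - F (s + \<tau>) (y_gamma tt p y s)) \<le> L * N * (2 * a)"
      unfolding N_def by (rule sum_lipschitz_bound[OF lip less_imp_le[OF \<open>L > 0\<close>] inW inW])
    moreover have "norm (F (s + \<tau>) (y_gamma tt p y s) - F s (y_gamma tt p y s)) \<le> e"
      using \<tau>F[OF inW] unfolding almost_periods_def by blast
    moreover have "e \<le> \<epsilon> / 4" unfolding e_def by simp
    ultimately show "norm (F (s + \<tau>) (y_gamma tt p y (s + \<tau>)) - F s (y_gamma tt p y s)) \<le> \<epsilon>"
      using norm_diff_triangle_le \<open>L * N * (2 * a) = \<epsilon> / 2\<close> \<open>\<epsilon> > 0\<close> by fastforce
  qed
qed

section \<open>Uniform continuity on the pieces\<close>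

lemma bounded_finite_net:
  fixes R :: "'a::heine_borel set"
  assumes "bounded R" "r > 0"
  obtains K where "finite K" "K \<subseteq> R" "R \<subseteq> (\<Union>v\<in>K. ball v r)"
proof -
  have "Met_TC.mtotally_bounded (closure R)"
    using assms(1) by (intro Met_TC.compactin_imp_mtotally_bounded) simp
  then have "Met_TC.mtotally_bounded R"
    by (rule Met_TC.mtotally_bounded_subset) (rule closure_subset)
  then show ?thesis
    using assms(2) that unfolding Met_TC.mtotally_bounded_def by auto
qed

lemma uniformly_equicontinuous_on_bounded:
  fixes F :: "real \<Rightarrow> 'w::{real_normed_vector,heine_borel} \<Rightarrow> 'b::real_normed_vector"
  assumes "bounded R" "R \<subseteq> W"
    and uc: "\<And>v. v \<in> W \<Longrightarrow> uniformly_continuous_on UNIV (\<lambda>s. F s v)"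
    and lip: "\<And>s x z. x \<in> W \<Longrightarrow> z \<in> W \<Longrightarrow> norm (F s x - F s z) \<le> M * norm (x - z)"
    and "M \<ge> 0" "e > 0"
  shows "\<exists>d>0. \<forall>w\<in>R. \<forall>x h. \<bar>h\<bar> \<le> d \<longrightarrow> norm (F (x + h) w - F x w) \<le> e"
proof -
  define r where "r = e / (3 * (M + 1))"
  have "r > 0" "M * r \<le> e / 3"
    unfolding r_def using \<open>M \<ge> 0\<close> \<open>e > 0\<close> by (simp_all add: field_simps)
  obtain K where K: "finite K" "K \<subseteq> R" "R \<subseteq> (\<Union>v\<in>K. ball v r)"
    using bounded_finite_net[OF \<open>bounded R\<close> \<open>r > 0\<close>] by blast
  obtain d where "d > 0" and d: "\<And>v x h. v \<in> K \<Longrightarrow> \<bar>h\<bar> \<le> d \<Longrightarrow> norm (F (x + h) v - F x v) \<le> e / 3"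
    using finite_uniformly_continuous_increments[of K "\<lambda>v s. F s v" "e / 3"] K(1,2) \<open>R \<subseteq> W\<close> uc \<open>e > 0\<close>
    by (metis divide_pos_pos subset_iff zero_less_numeral)
  \<comment> \<open>Compare with the nearest point v of the net, using the Lipschitz bound at both times.\<close>
  have "norm (F (x + h) w - F x w) \<le> e" if "w \<in> R" "\<bar>h\<bar> \<le> d" for w x h
  proof -
    obtain v where v: "v \<in> K" "norm (w - v) < r"
      using K(3) \<open>w \<in> R\<close> by (auto simp: dist_norm norm_minus_commute)
    have "w \<in> W" "v \<in> W" using \<open>w \<in> R\<close> v(1) K(2) \<open>R \<subseteq> W\<close> by auto
    have wv: "norm (F t w - F t v) \<le> e / 3" for t
      using lip[OF \<open>w \<in> W\<close> \<open>v \<in> W\<close>, of t] mult_left_mono[OF less_imp_le[OF v(2)] \<open>M \<ge> 0\<close>]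
        \<open>M * r \<le> e / 3\<close> by linarith
    have "norm (F (x + h) w - F x v) \<le> e / 3 + e / 3"
      using wv d[OF v(1) \<open>\<bar>h\<bar> \<le> d\<close>] by (rule norm_diff_triangle_le)
    moreover have "norm (F x v - F x w) \<le> e / 3"
      using wv by (simp add: norm_minus_commute)
    ultimately show ?thesis
      using norm_diff_triangle_le by fastforce
  qed
  then show ?thesis using \<open>d > 0\<close> by blast
qed

lemma H4_uniformly_continuous:
  assumes "H4 W F" "v \<in> W"
  shows "uniformly_continuous_on UNIV (\<lambda>s. F s v)"
proof (rule almost_periodic_uniformly_continuous)
  have "continuous_on (UNIV \<times> W) (\<lambda>(s, w). F s w)"
    using assms(1) by (simp add: H4_def)
  then have "continuous_on (range (\<lambda>s. (s, v))) (\<lambda>(s, w). F s w)"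
    by (rule continuous_on_subset) (use assms(2) in auto)
  then have "continuous_on UNIV ((\<lambda>(s, w). F s w) \<circ> (\<lambda>s. (s, v)))"
    by (intro continuous_on_compose continuous_intros)
  moreover have "rel_dense (almost_periods (\<lambda>s. F s v) e)" if "e > 0" for e
  proof -
    have "rel_dense (\<Inter>w\<in>W. almost_periods (\<lambda>s. F s w) e)"
      using period_family_unif_almost_periods[of W F] assms(1) that unfolding H4_def period_family_def by blast
    then show ?thesis by (rule rel_dense_mono) (use assms(2) in blast)
  qed
  ultimately show "almost_periodic (\<lambda>s. F s v)"
    unfolding almost_periodic_iff by (simp add: o_def)
qed

lemma uniformly_continuous_on_pieces:
  fixes y :: "real \<Rightarrow> 'a::euclidean_space"
    and F :: "real \<Rightarrow> 'a^'l::finite \<Rightarrow> 'b::real_normed_vector"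
  assumes seq: "admissible_seq tt" and y: "almost_periodic y"
    and inW: "\<And>s. y_gamma tt p y s \<in> W"
    and uc: "\<And>v. v \<in> W \<Longrightarrow> uniformly_continuous_on UNIV (\<lambda>s. F s v)"
    and lip: "\<forall>s. \<forall>x\<in>W. \<forall>z\<in>W. norm (F s x - F s z) \<le> L * (\<Sum>j\<in>UNIV. norm (x $ j - z $ j))"
    and "L > 0" "\<epsilon> > 0"
  shows "\<exists>\<delta>>0. \<forall>s \<tau> n. \<bar>\<tau>\<bar> \<le> \<delta> \<and> s \<in> {tt n ..< tt (n + 1)} \<and> s + \<tau> \<in> {tt n ..< tt (n + 1)} \<longrightarrow>
           norm (F (s + \<tau>) (y_gamma tt p y (s + \<tau>)) - F s (y_gamma tt p y s)) \<le> \<epsilon>"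
proof -
  have lip_norm: "norm (F s x - F s z) \<le> (L * CARD('l)) * norm (x - z)" if "x \<in> W" "z \<in> W" for s x z
  proof (rule sum_lipschitz_bound[OF lip _ that])
    show "norm (x $ j - z $ j) \<le> norm (x - z)" for j
      using Finite_Cartesian_Product.norm_nth_le[of "x - z" j] by simp
  qed (use \<open>L > 0\<close> in simp)
  have "bounded (range (y_gamma tt p y))"
    by (rule bounded_range_y_gamma[OF almost_periodic_bounded[OF y]])
  moreover have "range (y_gamma tt p y) \<subseteq> W" using inW by blast
  moreover note uc lip_norm
  moreover have "L * CARD('l) \<ge> 0" using \<open>L > 0\<close> by simp
  ultimately have "\<exists>\<delta>>0. \<forall>w\<in>range (y_gamma tt p y). \<forall>x h. \<bar>h\<bar> \<le> \<delta> \<longrightarrow> norm (F (x + h) w - F x w) \<le> \<epsilon>"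
    using \<open>\<epsilon> > 0\<close> by (rule uniformly_equicontinuous_on_bounded)
  then obtain \<delta> where "\<delta> > 0"
    and \<delta>: "\<And>w x h. w \<in> range (y_gamma tt p y) \<Longrightarrow> \<bar>h\<bar> \<le> \<delta> \<Longrightarrow> norm (F (x + h) w - F x w) \<le> \<epsilon>"
    by blast
  show ?thesis
  proof (intro exI[of _ \<delta>] conjI allI impI)
    fix s \<tau> n assume "\<bar>\<tau>\<bar> \<le> \<delta> \<and> s \<in> {tt n ..< tt (n + 1)} \<and> s + \<tau> \<in> {tt n ..< tt (n + 1)}"
    then have "\<bar>\<tau>\<bar> \<le> \<delta>" "y_gamma tt p y (s + \<tau>) = y_gamma tt p y s"
      using y_gamma_eq_on_piece[OF seq] by blast+
    then show "norm (F (s + \<tau>) (y_gamma tt p y (s + \<tau>)) - F s (y_gamma tt p y s)) \<le> \<epsilon>"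
      using \<delta>[OF rangeI] by simp
  qed (fact \<open>\<delta> > 0\<close>)
qed

theorem lemma9:
  fixes tt :: "int \<Rightarrow> real"
    and p :: "'l::finite \<Rightarrow> nat"
    and y :: "real \<Rightarrow> complex^'q::finite"
    and W :: "((complex^'q)^'l) set"
    and F :: "real \<Rightarrow> (complex^'q)^'l \<Rightarrow> complex^'q"
  assumes seq: "admissible_seq tt"
    and ap: "almost_periodic y"
    and inW: "\<forall>s. (\<chi> j. y (gammaP tt (int (p j)) s)) \<in> W"
    and h2: "H2 tt"
    and h4: "H4 W F"
  shows "\<forall>\<epsilon>>0.
     rel_dense {\<tau>. \<forall>s. s \<notin> (\<Union>n. {tt n - \<epsilon> <..< tt n + \<epsilon>}) \<longrightarrow>
        norm (F (s + \<tau>) (\<chi> j. y (gammaP tt (int (p j)) (s + \<tau>)))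
              - F s (\<chi> j. y (gammaP tt (int (p j)) s))) \<le> \<epsilon>}
     \<and> (\<exists>\<delta>>0. \<forall>s \<tau> n. \<bar>\<tau>\<bar> \<le> \<delta> \<and> s \<in> {tt n ..< tt (n + 1)} \<and> s + \<tau> \<in> {tt n ..< tt (n + 1)} \<longrightarrow>
        norm (F (s + \<tau>) (\<chi> j. y (gammaP tt (int (p j)) (s + \<tau>)))
              - F s (\<chi> j. y (gammaP tt (int (p j)) s))) \<le> \<epsilon>)"
proof -
  obtain L where "L > 0"
    and lip: "\<forall>s. \<forall>x\<in>W. \<forall>z\<in>W. norm (F s x - F s z) \<le> L * (\<Sum>j\<in>UNIV. norm (x $ j - z $ j))"
    using h4 unfolding H4_def by blast
  have F: "unif_almost_periodic_on W F" using h4 by (simp add: H4_def)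
  have inW': "y_gamma tt p y s \<in> W" for s using inW by (simp add: y_gamma_def)
  show ?thesis
    using almost_periods_off_jumps[OF seq h2 ap F inW' lip \<open>L > 0\<close>, unfolded y_gamma_def]
      uniformly_continuous_on_pieces[OF seq ap inW' H4_uniformly_continuous[OF h4] lip \<open>L > 0\<close>,
        unfolded y_gamma_def]
    by blast
qed

end
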